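(* Let $\alpha,\beta\in\mathbb{R}$ satisfy $\alpha^2>4$ and $\beta>0$, and let $q_{\alpha,\beta}(w)=w^4+\alpha w^3+(\beta-4)w^2-\alpha w+3$ for $w\in\mathbb{C}$. Then $q_{\alpha,\beta}$ has exactly $2$ roots in the open unit disk $U_1(0)=\{w\in\mathbb{C}:|w|<1\}$, counted with multiplicity. *)

theory Defs
  imports "HOL-Analysis.Analysis" "HOL-Computational_Algebra.Polynomial"
begin

definition q_poly :: "real \<Rightarrow> real \<Rightarrow> complex poly" where
  "q_poly \<alpha> \<beta> = [: 3, - complex_of_real \<alpha>, complex_of_real (\<beta> - 4), complex_of_real \<alpha>, 1 :]"

end

theory Submission
  imports Defs "HOL-Complex_Analysis.Complex_Analysis"
begin

(* Rouche's theorem on the unit circle, comparing q with the cubic F w = B w^3 + beta w^2 - B w,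
   where B = sgn alpha (8 / (|alpha| - 2) + (|alpha| + 2) / 2).  The quadratic factor of F changes
   sign between -1 and 1 and has root product -1, so F = B w (w - r) (w + 1/r) with 0 < |r| < 1 and
   F has exactly two zeros in the disk.  On |w| = 1 we have cnj w = 1/w, hence q - F = w^2 G and
   F = w^2 H with, for w = x + iy and d = alpha - 2x,
     |G|^2 - |H|^2 = 4 y^2 (16 y^2 + d^2 - 2 d B) - beta^2,
   and B is chosen so that 2 d B >= 16 + d^2 whenever |x| <= 1; thus |q - F| < |F| on the circle. *)

lemma zorder_poly:
  fixes p :: "complex poly"
  assumes "p \<noteq> 0"
  shows "zorder (poly p) z = int (order z p)"
proof -
  obtain r where r: "p = [:-z,1:] ^ order z p * r" "\<not> [:-z,1:] dvd r"
    using order_decomp[OF assms] by blast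
  then have "poly r z \<noteq> 0" by (simp add: poly_eq_0_iff_dvd)
  show ?thesis
  proof (rule zorder_eqI[where S=UNIV and g="poly r"])
    show "poly p w = poly r w * (w - z) powi int (order z p)" for w
      by (subst r(1)) (simp add: power_int_of_nat)
  qed (auto simp: \<open>poly r z \<noteq> 0\<close> intro: poly_holomorphic_on)
qed

lemma winding_number_circlepath_zorder_sum_poly:
  fixes p :: "complex poly"
  assumes "0 < r" and "p \<noteq> 0"
    and no_root_on_circle: "\<And>z. z \<in> sphere c r \<Longrightarrow> poly p z \<noteq> 0"
  shows "(\<Sum>z | poly p z = 0. winding_number (circlepath c r) z * of_int (zorder (poly p) z))
       = of_nat (\<Sum>z | poly p z = 0 \<and> z \<in> ball c r. order z p)"
proof -
  have term_eq: "winding_number (circlepath c r) z * of_int (zorder (poly p) z)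
        = (if z \<in> ball c r then of_nat (order z p) else 0)" if "poly p z = 0" for z
  proof (cases "z \<in> ball c r")
    case True
    then have "winding_number (circlepath c r) z = 1"
      by (intro winding_number_circlepath) (simp add: dist_norm norm_minus_commute)
    then show ?thesis using True zorder_poly[OF assms(2)] by simp
  next
    case False
    with no_root_on_circle[of z] that have "z \<notin> cball c r" by auto
    then have "winding_number (circlepath c r) z = 0"
      using \<open>0 < r\<close> by (intro winding_number_zero_outside[where s="cball c r"]) auto
    then show ?thesis using False by simp
  qed
  have "(\<Sum>z | poly p z = 0. winding_number (circlepath c r) z * of_int (zorder (poly p) z))
      = (\<Sum>z | poly p z = 0. if z \<in> ball c r then of_nat (order z p) else 0)"
    by (rule sum.cong) (auto simp: term_eq)
  also have "\<dots> = (\<Sum>z | poly p z = 0 \<and> z \<in> ball c r. of_nat (order z p))"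
    using poly_roots_finite[OF assms(2)] by (simp add: sum.inter_filter[symmetric] conj_commute)
  finally show ?thesis by simp
qed

lemma Rouche_poly_zeros_in_ball:
  fixes p f :: "complex poly"
  assumes "0 < r"
    and dominated: "\<And>z. z \<in> sphere c r \<Longrightarrow> cmod (poly p z - poly f z) < cmod (poly f z)"
  shows "(\<Sum>z | poly p z = 0 \<and> z \<in> ball c r. order z p)
       = (\<Sum>z | poly f z = 0 \<and> z \<in> ball c r. order z f)"
proof -
  have p_circle: "poly p z \<noteq> 0" and f_circle: "poly f z \<noteq> 0" if "z \<in> sphere c r" for z
    using dominated[OF that] by auto
  have "c + of_real r \<in> sphere c r" using \<open>0 < r\<close> by (simp add: dist_norm)
  then have "p \<noteq> 0" "f \<noteq> 0" using p_circle f_circle by auto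
  have "(\<Sum>z\<in>{z\<in>UNIV. poly f z + (poly p z - poly f z) = 0}. winding_number (circlepath c r) z
             * of_int (zorder (\<lambda>z. poly f z + (poly p z - poly f z)) z))
        = (\<Sum>z\<in>{z\<in>UNIV. poly f z = 0}. winding_number (circlepath c r) z * of_int (zorder (poly f) z))"
  proof (rule Rouche_theorem)
    show "finite {z \<in> UNIV. poly f z + (poly p z - poly f z) = 0}"
      using poly_roots_finite[OF \<open>p \<noteq> 0\<close>] by simp
    show "finite {z \<in> UNIV. poly f z = 0}"
      using poly_roots_finite[OF \<open>f \<noteq> 0\<close>] by simp
    show "\<forall>z\<in>path_image (circlepath c r). cmod (poly p z - poly f z) < cmod (poly f z)"
      using dominated \<open>0 < r\<close> by simp
  qed (auto intro!: holomorphic_intros poly_holomorphic_on)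
  then have "of_nat (\<Sum>z | poly p z = 0 \<and> z \<in> ball c r. order z p)
      = (of_nat (\<Sum>z | poly f z = 0 \<and> z \<in> ball c r. order z f) :: complex)"
    using winding_number_circlepath_zorder_sum_poly[OF \<open>0 < r\<close>] p_circle f_circle
      \<open>p \<noteq> 0\<close> \<open>f \<noteq> 0\<close>
    by simp
  then show ?thesis by (simp only: of_nat_eq_iff)
qed

lemma sum_order_roots_eq_size_proots:
  fixes p :: "'a::idom poly"
  assumes "p \<noteq> 0"
  shows "(\<Sum>z | poly p z = 0 \<and> P z. order z p) = size (filter_mset P (proots p))"
proof -
  have "set_mset (filter_mset P (proots p)) = {z. poly p z = 0 \<and> P z}" using assms by auto
  then show ?thesis using assms by (simp add: size_multiset_overloaded_eq)
qed

definition comparison_poly :: "real \<Rightarrow> real \<Rightarrow> complex poly" where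
  "comparison_poly B b = [:0, - of_real B, of_real b, of_real B:]"

lemma comparison_poly_factor:
  assumes "r \<noteq> 0" and "b = B * (1 / r - r)"
  shows "comparison_poly B b = smult (of_real B) ([:0, 1:] * [:- of_real r, 1:] * [:of_real (1 / r), 1:])"
proof -
  have "complex_of_real b = of_real B * (1 / of_real r - of_real r)"
    using assms(2) by simp
  then show ?thesis
    using assms(1) by (simp add: comparison_poly_def algebra_simps)
qed

lemma comparison_poly_zeros_in_unit_disk:
  assumes "B \<noteq> 0" and "b \<noteq> 0"
  shows "(\<Sum>z | poly (comparison_poly B b) z = 0 \<and> z \<in> ball 0 1. order z (comparison_poly B b)) = 2"
proof -
  have "\<exists>r>-1. r < 1 \<and> poly [:-B, b, B:] r = 0"
    by (rule poly_IVT) (use \<open>b \<noteq> 0\<close> in \<open>auto simp: zero_less_mult_iff\<close>)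
  then obtain r where r: "-1 < r" "r < 1" "poly [:-B, b, B:] r = 0"
    by blast
  have "r \<noteq> 0" using r(3) \<open>B \<noteq> 0\<close> by auto
  have "b = B * (1 / r - r)"
    using r(3) \<open>r \<noteq> 0\<close> by (simp add: field_simps)
  note factor = comparison_poly_factor[OF \<open>r \<noteq> 0\<close> this]
  have "proots (comparison_poly B b) = {#0, of_real r, - of_real (1 / r)#}"
    unfolding factor using \<open>B \<noteq> 0\<close> \<open>r \<noteq> 0\<close>
    by (simp add: proots_mult del: mult_pCons_left mult_pCons_right)
  moreover have "comparison_poly B b \<noteq> 0"
    using \<open>B \<noteq> 0\<close> by (simp add: comparison_poly_def)
  moreover have "- complex_of_real (1 / r) \<notin> ball 0 1"
    using r \<open>r \<noteq> 0\<close> by (simp add: norm_divide divide_simps)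
  ultimately show ?thesis
    using r by (simp add: sum_order_roots_eq_size_proots)
qed

lemma comparison_coeff_bound:
  fixes A e :: real
  assumes "2 < A" and "A - 2 \<le> e" and "e \<le> A + 2"
  shows "16 + e^2 \<le> 2 * e * (8 / (A - 2) + (A + 2) / 2)"
proof -
  have "2 * e * (8 / (A - 2) + (A + 2) / 2) = 16 * (e / (A - 2)) + e * (A + 2)"
    using assms(1) by (simp add: field_simps)
  moreover have "1 \<le> e / (A - 2)" using assms by (simp add: le_divide_eq)
  moreover have "e * e \<le> e * (A + 2)" using assms by (intro mult_left_mono) auto
  ultimately show ?thesis by (simp add: power2_eq_square)
qed

lemma signed_comparison_coeff_bound:
  fixes a x :: real
  assumes "4 < a^2" and "\<bar>x\<bar> \<le> 1"
  shows "16 + (a - 2 * x)^2 \<le> 2 * (a - 2 * x) * (sgn a * (8 / (\<bar>a\<bar> - 2) + (\<bar>a\<bar> + 2) / 2))"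
proof -
  have "2^2 < \<bar>a\<bar>^2" using assms(1) by simp
  then have "2 < \<bar>a\<bar>" by (rule power_less_imp_less_base) simp
  define K where "K = 8 / (\<bar>a\<bar> - 2) + (\<bar>a\<bar> + 2) / 2"
  consider "2 < a" | "a < -2" using \<open>2 < \<bar>a\<bar>\<close> by linarith
  then have "16 + (a - 2 * x)^2 \<le> 2 * (a - 2 * x) * (sgn a * K)"
  proof cases
    case 1
    have "16 + (a - 2 * x)^2 \<le> 2 * (a - 2 * x) * K"
      unfolding K_def using 1 assms(2) by (intro comparison_coeff_bound) auto
    then show ?thesis using 1 by simp
  next
    case 2
    have "16 + (2 * x - a)^2 \<le> 2 * (2 * x - a) * K"
      unfolding K_def using 2 assms(2) by (intro comparison_coeff_bound) auto
    then show ?thesis using 2 by (simp add: power2_commute algebra_simps)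
  qed
  then show ?thesis by (simp add: K_def)
qed

lemma q_poly_dominated_on_unit_circle:
  fixes a b B :: real and z :: complex
  assumes "norm z = 1" and "0 < b"
    and coeff_bound: "16 + (a - 2 * Re z)^2 \<le> 2 * (a - 2 * Re z) * B"
  shows "cmod (poly (q_poly a b) z - poly (comparison_poly B b) z)
       < cmod (poly (comparison_poly B b) z)"
proof -
  define x y where "x = Re z" and "y = Im z"
  have xy: "x^2 + y^2 = 1"
    using assms(1) unfolding x_def y_def by (metis cmod_power2 power_one)
  have "cnj z * z = 1"
    using assms(1) complex_norm_square[of z] by (simp add: mult.commute)
  define G where "G = z^2 + 3 * cnj z^2 + (of_real a - of_real B) * (z - cnj z) - 4"
  define H where "H = of_real b + of_real B * (z - cnj z)"
  have diff_eq: "poly (q_poly a b) z - poly (comparison_poly B b) z = z^2 * G"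
    unfolding G_def using \<open>cnj z * z = 1\<close>
    by (simp add: q_poly_def comparison_poly_def of_real_diff) algebra
  have comparison_eq: "poly (comparison_poly B b) z = z^2 * H"
    unfolding H_def using \<open>cnj z * z = 1\<close> by (simp add: comparison_poly_def) algebra
  have "cmod G ^ 2 = (4 * (x^2 - y^2) - 4)^2 + (2 * y * (a - 2 * x - B))^2"
    unfolding cmod_power2 G_def x_def y_def by (simp add: power2_eq_square algebra_simps)
  also have "\<dots> = (8 * y^2)^2 + (2 * y * (a - 2 * x - B))^2"
    using xy by (simp add: algebra_simps power2_eq_square flip: eq_diff_eq)
  also have "\<dots> = 4 * y^2 * (16 * y^2 + (a - 2 * x)^2 - 2 * (a - 2 * x) * B) + (2 * B * y)^2"
    by (simp add: power2_eq_square algebra_simps)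
  also have "\<dots> \<le> (2 * B * y)^2"
  proof -
    have "y^2 \<le> 1" using xy zero_le_power2[of x] by linarith
    then have "16 * y^2 + (a - 2 * x)^2 - 2 * (a - 2 * x) * B \<le> 0"
      using coeff_bound unfolding x_def by linarith
    then show ?thesis by (simp add: mult_nonneg_nonpos)
  qed
  also have "\<dots> < b^2 + (2 * B * y)^2" using \<open>0 < b\<close> by simp
  also have "\<dots> = cmod H ^ 2"
    unfolding cmod_power2 H_def x_def y_def by (simp add: power2_eq_square algebra_simps)
  finally have "cmod G < cmod H"
    by (rule power_less_imp_less_base) simp
  then have "cmod (z^2 * G) < cmod (z^2 * H)"
    by (simp add: norm_mult norm_power assms(1))
  then show ?thesis
    unfolding diff_eq unfolding comparison_eq .
qed

theorem mainTheorem1: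
  fixes \<alpha> \<beta> :: real
  assumes "\<alpha>^2 > 4" and "\<beta> > 0"
  shows "(\<Sum>w \<in> {w. poly (q_poly \<alpha> \<beta>) w = 0 \<and> norm w < 1}. order w (q_poly \<alpha> \<beta>)) = 2"
proof -
  define B where "B = sgn \<alpha> * (8 / (\<bar>\<alpha>\<bar> - 2) + (\<bar>\<alpha>\<bar> + 2) / 2)"
  have coeff_bound: "16 + (\<alpha> - 2 * x)^2 \<le> 2 * (\<alpha> - 2 * x) * B" if "\<bar>x\<bar> \<le> 1" for x
    unfolding B_def using signed_comparison_coeff_bound[OF assms(1) that] .
  have "0 < 16 + \<alpha>^2" by (simp add: add_pos_nonneg)
  also have "\<dots> \<le> 2 * \<alpha> * B" using coeff_bound[of 0] by simp
  finally have "B \<noteq> 0" by auto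
  have "cmod (poly (q_poly \<alpha> \<beta>) z - poly (comparison_poly B \<beta>) z)
      < cmod (poly (comparison_poly B \<beta>) z)"
    if "z \<in> sphere 0 1" for z
    using that assms(2) coeff_bound abs_Re_le_cmod[of z] by (intro q_poly_dominated_on_unit_circle) auto
  then have "(\<Sum>w | poly (q_poly \<alpha> \<beta>) w = 0 \<and> w \<in> ball 0 1. order w (q_poly \<alpha> \<beta>))
      = (\<Sum>w | poly (comparison_poly B \<beta>) w = 0 \<and> w \<in> ball 0 1. order w (comparison_poly B \<beta>))"
    by (intro Rouche_poly_zeros_in_ball) simp_all
  also have "\<dots> = 2"
    using \<open>B \<noteq> 0\<close> assms(2) by (intro comparison_poly_zeros_in_unit_disk) simp_all
  finally show ?thesis by simp
qed

end
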